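(* Every bounded orbit of the planar Stark problem $$\ddot x=-\frac{x}{r^3}+1,\qquad \ddot y=-\frac{y}{r^3},\qquad r=\sqrt{x^2+y^2},$$ is either a collision–ejection orbit on the negative $x$-axis, or it remains within the unit disc $\{|q|\le 1\}$ for all time.
   Context: A collision–ejection orbit on the negative $x$-axis is a solution moving on $\{(x,0):x<0\}$ which reaches the origin (collision) and, after regularization, is ejected back along the same half-line. *)

theory Defs
  imports "HOL-Analysis.Analysis"
begin

definition stark_field :: "real \<times> real \<Rightarrow> real \<times> real" where
  "stark_field q = (let x = fst q; y = snd q; r = sqrt (x\<^sup>2 + y\<^sup>2)
                    in (- x / r ^ 3 + 1, - y / r ^ 3))"

text \<open>A (Levi-Civita regularized) solution of the Stark problem defined for all time:
  q is continuous; away from collisions it is a classical C^2 solution;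
  collision times are isolated and at each collision the motion is ejected back
  along the incoming path (q(t0+s) = q(t0-s) near t0), which is what the
  regularization produces.\<close>
definition stark_solution :: "(real \<Rightarrow> real \<times> real) \<Rightarrow> bool" where
  "stark_solution q \<longleftrightarrow>
     continuous_on UNIV q \<and>
     (\<exists>v. \<forall>t. q t \<noteq> 0 \<longrightarrow>
            (q has_vector_derivative v t) (at t) \<and>
            (v has_vector_derivative stark_field (q t)) (at t)) \<and>
     (\<forall>t0. q t0 = 0 \<longrightarrow>
        (\<exists>\<delta>>0. \<forall>s. 0 < \<bar>s\<bar> \<and> \<bar>s\<bar> < \<delta> \<longrightarrow>
               q (t0 + s) \<noteq> 0 \<and> q (t0 + s) = q (t0 - s)))"

definition collision_ejection_neg_x :: "(real \<Rightarrow> real \<times> real) \<Rightarrow> bool" where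
  "collision_ejection_neg_x q \<longleftrightarrow>
     (\<forall>t. snd (q t) = 0 \<and> fst (q t) \<le> 0) \<and> (\<exists>t. q t = 0)"

end

theory Submission
  imports Defs
begin

text \<open>
  The energy \<open>E = |v|\<^sup>2/2 - 1/r - x\<close> is conserved, also across collisions, where the
  regularised motion reverses its velocity.  The parabolic coordinate \<open>W = r + x\<close> satisfies
  \<open>r W' = g\<close> with \<open>g = q \<cdot> v + r v\<^sub>x\<close>, and \<open>r g' = W (E + W) + Q/2\<close> for a positive
  semidefinite quadratic form \<open>Q\<close> in the velocity.  Hence once \<open>W > max 0 (-E)\<close> and
  \<open>g \<ge> 0\<close>, both \<open>W\<close> and \<open>g\<close> keep increasing and \<open>W\<close> grows at least linearly, so the
  orbit is unbounded; if \<open>g < 0\<close> the same happens backwards in time.  Along a bounded orbit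
  therefore \<open>W \<le> max 0 (-E)\<close>.  At a point with \<open>r > 1\<close> we have \<open>W > -E\<close>, which forces
  \<open>E > 0\<close> and \<open>W = 0\<close> throughout: the orbit lies on the negative \<open>x\<close>-axis.  There
  \<open>x'' \<ge> 1\<close>, so it cannot avoid the origin.
\<close>

lemma has_real_derivative_fst:
  fixes f :: "real \<Rightarrow> real \<times> 'b::real_normed_vector"
  assumes "(f has_vector_derivative f') (at t)"
  shows "((\<lambda>t. fst (f t)) has_real_derivative fst f') (at t)"
  using has_derivative_fst[OF assms[unfolded has_vector_derivative_def]]
  by (simp add: has_real_derivative_iff_has_vector_derivative has_vector_derivative_def)

lemma has_real_derivative_inner:
  fixes f g :: "real \<Rightarrow> 'a::real_inner"
  assumes "(f has_vector_derivative f') (at t)" "(g has_vector_derivative g') (at t)"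
  shows "((\<lambda>t. inner (f t) (g t)) has_real_derivative inner f' (g t) + inner (f t) g') (at t)"
  using has_derivative_inner[OF assms[unfolded has_vector_derivative_def]]
  by (simp add: has_real_derivative_iff_has_vector_derivative has_vector_derivative_def algebra_simps)

lemma has_real_derivative_norm:
  fixes f :: "real \<Rightarrow> 'a::real_inner"
  assumes "(f has_vector_derivative f') (at t)" "f t \<noteq> 0"
  shows "((\<lambda>t. norm (f t)) has_real_derivative inner (f t) f' / norm (f t)) (at t)"
  using has_derivative_compose[OF assms(1)[unfolded has_vector_derivative_def]
      has_derivative_norm[OF assms(2)]]
  by (simp add: has_real_derivative_iff_has_vector_derivative has_vector_derivative_def
      sgn_div_norm inner_commute divide_inverse ac_simps)

lemma DERIV_lower_bound_imp_ge:
  fixes f f' :: "real \<Rightarrow> real"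
  assumes "a \<le> b"
    and "\<And>t. a \<le> t \<Longrightarrow> t \<le> b \<Longrightarrow> (f has_real_derivative f' t) (at t)"
    and "\<And>t. a \<le> t \<Longrightarrow> t \<le> b \<Longrightarrow> c \<le> f' t"
  shows "f a + c * (b - a) \<le> f b"
proof -
  have "f a - c * a \<le> f b - c * b"
  proof (rule DERIV_nonneg_imp_nondecreasing[OF assms(1)])
    fix t assume "a \<le> t" "t \<le> b"
    then show "\<exists>y. ((\<lambda>t. f t - c * t) has_real_derivative y) (at t) \<and> 0 \<le> y"
      using assms(2,3) by (intro exI[of _ "f' t - c"]) (auto intro!: derivative_eq_intros)
  qed
  then show ?thesis by (simp add: algebra_simps)
qed

lemma stark_field_eq: "stark_field p = (1, 0) - (1 / norm p ^ 3) *\<^sub>R p"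
  by (cases p) (simp add: stark_field_def norm_Pair Let_def)

definition stark_energy :: "real \<times> real \<Rightarrow> real \<times> real \<Rightarrow> real" where
  "stark_energy p w = (norm w)\<^sup>2 / 2 - 1 / norm p - fst p"

text \<open>With \<open>x = (\<xi>\<^sup>2 - \<eta>\<^sup>2)/2\<close>, \<open>y = \<xi>\<eta>\<close> this is \<open>\<xi>\<^sup>2\<close>.\<close>
definition parabolic_coord :: "real \<times> real \<Rightarrow> real" where
  "parabolic_coord p = norm p + fst p"

definition parabolic_flux :: "real \<times> real \<Rightarrow> real \<times> real \<Rightarrow> real" where
  "parabolic_flux p w = inner p w + norm p * fst w"

lemma abs_fst_le_norm: "\<bar>fst p\<bar> \<le> norm (p :: real \<times> real)"
  using norm_fst_le[of "fst p" "snd p"] by simp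

lemma parabolic_coord_nonneg: "0 \<le> parabolic_coord p"
  using abs_fst_le_norm[of p] by (simp add: parabolic_coord_def)

lemma parabolic_coord_le: "parabolic_coord p \<le> 2 * norm p"
  using abs_fst_le_norm[of p] by (simp add: parabolic_coord_def)

lemma parabolic_coord_eq_0_iff: "parabolic_coord p = 0 \<longleftrightarrow> snd p = 0 \<and> fst p \<le> 0"
proof (cases p)
  case (Pair x y)
  have "sqrt (x\<^sup>2 + y\<^sup>2) = - x \<longleftrightarrow> y = 0 \<and> x \<le> 0"
    by (smt (verit) power_minus_Bit0 real_sqrt_pow2_iff real_sqrt_unique zero_eq_power2)
  then show ?thesis
    using Pair by (auto simp: parabolic_coord_def norm_Pair)
qed

lemma neg_stark_energy_less_parabolic_coord:
  assumes "1 < norm p"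
  shows "- stark_energy p w < parabolic_coord p"
proof -
  have "1 / norm p < 1" using assms by (simp add: divide_less_eq)
  moreover have "0 \<le> (norm w)\<^sup>2 / 2" by simp
  ultimately show ?thesis
    using assms unfolding stark_energy_def parabolic_coord_def by linarith
qed

text \<open>
  The expression is the derivative of \<^const>\<open>parabolic_flux\<close> along the motion; \<open>r\<close> times it
  equals \<open>W (W + E) + Q/2\<close>, where \<open>Q\<close> is positive semidefinite because its
  determinant \<open>r\<^sup>2 - x\<^sup>2 - y\<^sup>2\<close> vanishes.
\<close>
lemma parabolic_flux_rate_pos:
  fixes p w :: "real \<times> real"
  assumes W: "0 < parabolic_coord p" and EW: "0 < parabolic_coord p + stark_energy p w"
  shows "0 < inner w w + inner p (stark_field p) + inner p w / norm p * fst w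
             + norm p * fst (stark_field p)"
proof -
  obtain x y u z where p: "p = (x, y)" and w: "w = (u, z)" by (cases p, cases w)
  define r where "r = norm p"
  have "p \<noteq> 0"
    using W by (auto simp: parabolic_coord_def)
  then have r: "0 < r" "r\<^sup>2 = x\<^sup>2 + y\<^sup>2"
    by (simp_all add: r_def p norm_Pair sum_power2_gt_zero_iff zero_prod_def)
  define Q where "Q = (r + x) * u\<^sup>2 + 2 * y * u * z + (r - x) * z\<^sup>2"
  have "(r + x) * Q - ((r + x) * u + y * z)\<^sup>2 = (r\<^sup>2 - x\<^sup>2 - y\<^sup>2) * z\<^sup>2"
    by (simp add: Q_def algebra_simps power2_eq_square)
  then have "(r + x) * Q = ((r + x) * u + y * z)\<^sup>2"
    using r(2) by simp
  moreover have "0 < r + x"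
    using W by (simp add: parabolic_coord_def r_def p)
  ultimately have Q: "0 \<le> Q"
    by (metis zero_le_power2 zero_le_mult_iff not_le)
  have "inner p (stark_field p) = x - r\<^sup>2 / r ^ 3"
    unfolding stark_field_eq r_def[symmetric] r(2)
    by (simp add: p inner_Pair algebra_simps power2_eq_square add_divide_distrib)
  also have "\<dots> = x - 1 / r"
    using r(1) by (simp add: power2_eq_square power3_eq_cube)
  finally have field: "inner p (stark_field p) = x - 1 / r" .
  have field_fst: "fst (stark_field p) = 1 - x / r ^ 3"
    unfolding stark_field_eq r_def[symmetric] by (simp add: p)
  have "r * (inner w w + inner p (stark_field p) + inner p w / norm p * fst w
             + norm p * fst (stark_field p))
        = parabolic_coord p * (parabolic_coord p + stark_energy p w) + Q / 2"
    using r(1) unfolding field field_fst parabolic_coord_def stark_energy_def r_def[symmetric]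
    by (simp add: p w Q_def
        inner_Pair norm_Pair field_simps power2_eq_square power3_eq_cube)
  moreover have "0 < parabolic_coord p * (parabolic_coord p + stark_energy p w) + Q / 2"
    using W EW Q by (simp add: add_pos_nonneg)
  ultimately show ?thesis
    using r(1) by (metis zero_less_mult_pos)
qed

lemma has_real_derivative_stark_energy:
  assumes q': "(q has_vector_derivative v t) (at t)"
    and v': "(v has_vector_derivative stark_field (q t)) (at t)" and "q t \<noteq> 0"
  shows "((\<lambda>t. stark_energy (q t) (v t)) has_real_derivative 0) (at t)"
proof -
  have "((\<lambda>t. stark_energy (q t) (v t)) has_real_derivative
          (inner (stark_field (q t)) (v t) + inner (v t) (stark_field (q t))) / 2
          + inner (q t) (v t) / norm (q t) ^ 3 - fst (v t)) (at t)"
    unfolding stark_energy_def power2_norm_eq_inner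
    using assms has_real_derivative_inner[OF v' v'] has_real_derivative_norm[OF q']
      has_real_derivative_fst[OF q']
    by (auto intro!: derivative_eq_intros simp: field_simps power3_eq_cube)
  moreover have "inner w (1, 0) = fst w" for w :: "real \<times> real"
    by (cases w) simp
  ultimately show ?thesis
    using \<open>q t \<noteq> 0\<close> unfolding stark_field_eq
    by (simp add: inner_diff_left inner_diff_right inner_commute power2_eq_square power3_eq_cube
        field_simps)
qed

lemma has_real_derivative_parabolic_coord:
  assumes q': "(q has_vector_derivative v t) (at t)" and "q t \<noteq> 0"
  shows "((\<lambda>t. parabolic_coord (q t)) has_real_derivative
           parabolic_flux (q t) (v t) / norm (q t)) (at t)"
  unfolding parabolic_coord_def parabolic_flux_def
  using assms has_real_derivative_norm[OF q'] has_real_derivative_fst[OF q']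
  by (auto intro!: derivative_eq_intros simp: add_divide_distrib)

lemma has_real_derivative_parabolic_flux:
  assumes q': "(q has_vector_derivative v t) (at t)"
    and v': "(v has_vector_derivative stark_field (q t)) (at t)" and "q t \<noteq> 0"
  shows "((\<lambda>t. parabolic_flux (q t) (v t)) has_real_derivative
           inner (v t) (v t) + inner (q t) (stark_field (q t))
           + inner (q t) (v t) / norm (q t) * fst (v t) + norm (q t) * fst (stark_field (q t))) (at t)"
  unfolding parabolic_flux_def
  using assms has_real_derivative_inner[OF q' v'] has_real_derivative_norm[OF q']
    has_real_derivative_fst[OF v']
  by (auto intro!: derivative_eq_intros)

locale stark_orbit =
  fixes q v :: "real \<Rightarrow> real \<times> real"
  assumes continuous: "continuous_on UNIV q"
    and ode: "q t \<noteq> 0 \<Longrightarrow> (q has_vector_derivative v t) (at t)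
                          \<and> (v has_vector_derivative stark_field (q t)) (at t)"
    and ejection: "q t0 = 0 \<Longrightarrow> \<exists>\<delta>>0. \<forall>s. 0 < \<bar>s\<bar> \<and> \<bar>s\<bar> < \<delta> \<longrightarrow>
                     q (t0 + s) \<noteq> 0 \<and> q (t0 + s) = q (t0 - s)"

lemma stark_solution_iff_stark_orbit: "stark_solution q \<longleftrightarrow> (\<exists>v. stark_orbit q v)"
  unfolding stark_solution_def stark_orbit_def by blast

context stark_orbit
begin

lemma time_reversal: "stark_orbit (\<lambda>t. q (- t)) (\<lambda>t. - v (- t))"
proof
  show "continuous_on UNIV (\<lambda>t. q (- t))"
    by (rule continuous_on_compose2[OF continuous]) (auto intro: continuous_intros)
next
  fix t assume "q (- t) \<noteq> 0"
  then have q': "(q has_vector_derivative v (- t)) (at (- t))"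
    and v': "(v has_vector_derivative stark_field (q (- t))) (at (- t))"
    using ode by auto
  have reflect: "(uminus has_vector_derivative - 1) (at t)"
    by (auto intro!: derivative_eq_intros)
  show "((\<lambda>t. q (- t)) has_vector_derivative - v (- t)) (at t) \<and>
        ((\<lambda>t. - v (- t)) has_vector_derivative stark_field (q (- t))) (at t)"
    using vector_diff_chain_at[OF reflect, of q, simplified, OF q']
      has_vector_derivative_minus[OF vector_diff_chain_at[OF reflect, of v, simplified, OF v']]
    by (simp add: o_def)
next
  fix t0 assume "q (- t0) = 0"
  then obtain \<delta> where "\<delta> > 0" and \<delta>: "\<forall>s. 0 < \<bar>s\<bar> \<and> \<bar>s\<bar> < \<delta> \<longrightarrow>
      q (- t0 + s) \<noteq> 0 \<and> q (- t0 + s) = q (- t0 - s)"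
    using ejection by blast
  have "q (- (t0 + s)) \<noteq> 0 \<and> q (- (t0 + s)) = q (- (t0 - s))" if "0 < \<bar>s\<bar> \<and> \<bar>s\<bar> < \<delta>" for s
    using \<delta>[rule_format, of s] that by (smt (verit))
  with \<open>\<delta> > 0\<close> show "\<exists>\<delta>>0. \<forall>s. 0 < \<bar>s\<bar> \<and> \<bar>s\<bar> < \<delta> \<longrightarrow>
      q (- (t0 + s)) \<noteq> 0 \<and> q (- (t0 + s)) = q (- (t0 - s))"
    by blast
qed

lemma energy_constant_on_convex:
  assumes "convex S" "\<And>t. t \<in> S \<Longrightarrow> q t \<noteq> 0"
  shows "\<exists>c. \<forall>t\<in>S. stark_energy (q t) (v t) = c"
proof (rule has_field_derivative_zero_constant[OF assms(1)])
  fix t assume "t \<in> S"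
  then show "((\<lambda>t. stark_energy (q t) (v t)) has_real_derivative 0) (at t within S)"
    using has_real_derivative_stark_energy ode assms(2) by (blast intro: has_field_derivative_at_within)
qed

lemma ejection_energy:
  assumes "q t0 = 0"
  obtains \<delta> where "\<delta> > 0" and "\<And>s. 0 < \<bar>s\<bar> \<Longrightarrow> \<bar>s\<bar> < \<delta> \<Longrightarrow>
    q (t0 + s) \<noteq> 0 \<and> stark_energy (q (t0 + s)) (v (t0 + s)) = stark_energy (q (t0 - s)) (v (t0 - s))"
proof -
  obtain \<delta> where "\<delta> > 0" and \<delta>: "\<And>s. 0 < \<bar>s\<bar> \<Longrightarrow> \<bar>s\<bar> < \<delta> \<Longrightarrow>
      q (t0 + s) \<noteq> 0 \<and> q (t0 + s) = q (t0 - s)"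
    using ejection[OF assms] by blast
  have v_reflect: "v (t0 + s) = - v (t0 - s)" if s: "0 < \<bar>s\<bar>" "\<bar>s\<bar> < \<delta>" for s
  proof -
    have "q (t0 + s) \<noteq> 0" "q (t0 - s) \<noteq> 0"
      using \<delta>[OF s] \<delta>[of "- s"] s by auto
    then have q'_fwd: "(q has_vector_derivative v (t0 + s)) (at (t0 + s))"
      and q'_bwd: "(q has_vector_derivative v (t0 - s)) (at (t0 - s))"
      using ode by auto
    have shift: "((\<lambda>h. t0 + h) has_vector_derivative 1) (at s)"
      and reflect: "((\<lambda>h. t0 - h) has_vector_derivative - 1) (at s)"
      by (auto intro!: derivative_eq_intros)
    have fwd: "((\<lambda>h. q (t0 + h)) has_vector_derivative v (t0 + s)) (at s)"
      using vector_diff_chain_at[OF shift, of q] q'_fwd by (simp add: o_def)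
    have bwd: "((\<lambda>h. q (t0 - h)) has_vector_derivative - v (t0 - s)) (at s)"
      using vector_diff_chain_at[OF reflect, of q] q'_bwd by (simp add: o_def)
    have "open {h. 0 < \<bar>h\<bar> \<and> \<bar>h\<bar> < \<delta>}"
      by (intro open_Collect_conj open_Collect_less continuous_intros)
    then have "((\<lambda>h. q (t0 - h)) has_vector_derivative v (t0 + s)) (at s)"
      by (rule has_vector_derivative_transform_within_open[OF fwd]) (use \<delta> s in auto)
    then show ?thesis
      using bwd by (rule vector_derivative_unique_at)
  qed
  show ?thesis
  proof (rule that[OF \<open>\<delta> > 0\<close>])
    fix s assume s: "0 < \<bar>s\<bar>" "\<bar>s\<bar> < \<delta>"
    then show "q (t0 + s) \<noteq> 0 \<and> stark_energy (q (t0 + s)) (v (t0 + s))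
                               = stark_energy (q (t0 - s)) (v (t0 - s))"
      using \<delta>[OF s] v_reflect[OF s] by (auto simp: stark_energy_def)
  qed
qed

lemma collision_free_dense:
  assumes "open T" "t \<in> T"
  shows "\<exists>s\<in>T. q s \<noteq> 0"
proof (cases "q t = 0")
  case True
  obtain e where "e > 0" "ball t e \<subseteq> T"
    using assms openE by blast
  moreover obtain \<delta> where "\<delta> > 0" "\<And>s. 0 < \<bar>s\<bar> \<Longrightarrow> \<bar>s\<bar> < \<delta> \<Longrightarrow> q (t + s) \<noteq> 0"
    using ejection[OF True] by blast
  ultimately have "t + min e \<delta> / 2 \<in> T" "q (t + min e \<delta> / 2) \<noteq> 0"
    by (auto simp: dist_real_def)
  then show ?thesis by blast
qed (use assms in blast)

lemma energy_locally_constant: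
  obtains T where "open T" "t \<in> T"
    "\<And>s s'. s \<in> T \<Longrightarrow> s' \<in> T \<Longrightarrow> q s \<noteq> 0 \<Longrightarrow> q s' \<noteq> 0 \<Longrightarrow>
       stark_energy (q s) (v s) = stark_energy (q s') (v s')"
proof (cases "q t = 0")
  case False
  have "open {s. q s \<noteq> 0}"
    by (rule open_Collect_neq[OF continuous continuous_on_const])
  then obtain e where "e > 0" and e: "ball t e \<subseteq> {s. q s \<noteq> 0}"
    using False openE by blast
  have "\<exists>c. \<forall>s\<in>ball t e. stark_energy (q s) (v s) = c"
    using e by (intro energy_constant_on_convex) auto
  then obtain c where "\<forall>s\<in>ball t e. stark_energy (q s) (v s) = c" ..
  with \<open>e > 0\<close> show ?thesis
    by (intro that[of "ball t e"]) auto
next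
  case True
  obtain \<delta> where "\<delta> > 0" and \<delta>: "\<And>s. 0 < \<bar>s\<bar> \<Longrightarrow> \<bar>s\<bar> < \<delta> \<Longrightarrow>
    q (t + s) \<noteq> 0 \<and> stark_energy (q (t + s)) (v (t + s)) = stark_energy (q (t - s)) (v (t - s))"
    using ejection_energy[OF True] by blast
  have "\<exists>c. \<forall>s\<in>{t<..<t + \<delta>}. stark_energy (q s) (v s) = c"
  proof (rule energy_constant_on_convex)
    fix s assume "s \<in> {t<..<t + \<delta>}"
    then show "q s \<noteq> 0" using \<delta>[of "s - t"] by simp
  qed simp
  then obtain c where c: "\<forall>s\<in>{t<..<t + \<delta>}. stark_energy (q s) (v s) = c" ..
  have "stark_energy (q s) (v s) = c" if "s \<in> ball t \<delta>" "q s \<noteq> 0" for s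
  proof (cases "t < s")
    case True
    then show ?thesis using c that by (auto simp: dist_real_def)
  next
    case False
    moreover have "s \<noteq> t"
      using that True by auto
    ultimately have "0 < \<bar>t - s\<bar>" "\<bar>t - s\<bar> < \<delta>"
      using that by (auto simp: dist_real_def)
    from \<delta>[OF this] have "stark_energy (q s) (v s) = stark_energy (q (t + (t - s))) (v (t + (t - s)))"
      by simp
    also have "\<dots> = c"
    proof -
      have "t + (t - s) \<in> {t<..<t + \<delta>}"
        using False \<open>s \<noteq> t\<close> \<open>\<bar>t - s\<bar> < \<delta>\<close> by auto
      then show ?thesis using c by blast
    qed
    finally show ?thesis .
  qed
  with \<open>\<delta> > 0\<close> show ?thesis
    by (intro that[of "ball t \<delta>"]) auto
qed

text \<open>
  The energy is locally constant among collision-free times, and these are dense; connectedness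
  of the time axis makes it globally constant.
\<close>
theorem energy_conservation:
  assumes "q s \<noteq> 0" "q t \<noteq> 0"
  shows "stark_energy (q t) (v t) = stark_energy (q s) (v s)"
proof (rule connected_induction[OF connected_UNIV, where a = s and b = t
      and P = "\<lambda>t. q t \<noteq> 0" and Q = "\<lambda>t. stark_energy (q t) (v t) = stark_energy (q s) (v s)"])
  show "\<exists>z. z \<in> T \<and> q z \<noteq> 0" if "openin (top_of_set UNIV) T" "a \<in> T" for T a
    using collision_free_dense[of T a] that by auto
  show "\<exists>T. openin (top_of_set UNIV) T \<and> a \<in> T \<and>
          (\<forall>x\<in>T. \<forall>y\<in>T. q x \<noteq> 0 \<and> q y \<noteq> 0 \<and>
             stark_energy (q x) (v x) = stark_energy (q s) (v s) \<longrightarrow>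
             stark_energy (q y) (v y) = stark_energy (q s) (v s))" for a
  proof -
    obtain T where "open T" "a \<in> T" and T: "\<And>s s'. s \<in> T \<Longrightarrow> s' \<in> T \<Longrightarrow> q s \<noteq> 0 \<Longrightarrow> q s' \<noteq> 0 \<Longrightarrow>
       stark_energy (q s) (v s) = stark_energy (q s') (v s')"
      using energy_locally_constant[of a] by blast
    have "openin (top_of_set UNIV) T"
      using \<open>open T\<close> by simp
    with \<open>a \<in> T\<close> show ?thesis
      by (intro exI[of _ T]) (auto dest: T)
  qed
qed (use assms in auto)

definition orbit_energy :: real where
  "orbit_energy = stark_energy (q (SOME t. q t \<noteq> 0)) (v (SOME t. q t \<noteq> 0))"

lemma stark_energy_eq_orbit_energy: "q t \<noteq> 0 \<Longrightarrow> stark_energy (q t) (v t) = orbit_energy"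
  unfolding orbit_energy_def by (metis (mono_tags) energy_conservation someI)

lemma continuous_parabolic_coord: "continuous_on UNIV (\<lambda>t. parabolic_coord (q t))"
  unfolding parabolic_coord_def by (intro continuous_intros continuous)

lemma parabolic_flux_increasing:
  assumes "a < b" and above: "\<And>u. a \<le> u \<Longrightarrow> u \<le> b \<Longrightarrow> max 0 (- orbit_energy) < parabolic_coord (q u)"
  shows "parabolic_flux (q a) (v a) < parabolic_flux (q b) (v b)"
proof (rule DERIV_pos_imp_increasing[OF assms(1)])
  fix u assume u: "a \<le> u" "u \<le> b"
  have "q u \<noteq> 0"
    using above[OF u] by (auto simp: parabolic_coord_def)
  then have "0 < parabolic_coord (q u)" "0 < parabolic_coord (q u) + stark_energy (q u) (v u)"
    using above[OF u] stark_energy_eq_orbit_energy by auto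
  with \<open>q u \<noteq> 0\<close> show "\<exists>y. ((\<lambda>t. parabolic_flux (q t) (v t)) has_real_derivative y) (at u) \<and> 0 < y"
    using has_real_derivative_parabolic_flux ode parabolic_flux_rate_pos by blast
qed

lemma parabolic_flux_mono:
  assumes "a \<le> b" "\<And>u. a \<le> u \<Longrightarrow> u \<le> b \<Longrightarrow> max 0 (- orbit_energy) < parabolic_coord (q u)"
  shows "parabolic_flux (q a) (v a) \<le> parabolic_flux (q b) (v b)"
  using parabolic_flux_increasing[of a b] assms by (cases "a = b") auto

lemma parabolic_coord_mono:
  assumes "a \<le> b" "0 \<le> parabolic_flux (q a) (v a)"
    and above: "\<And>u. a \<le> u \<Longrightarrow> u \<le> b \<Longrightarrow> max 0 (- orbit_energy) < parabolic_coord (q u)"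
  shows "parabolic_coord (q a) \<le> parabolic_coord (q b)"
proof (rule DERIV_nonneg_imp_nondecreasing[OF assms(1)])
  fix u assume u: "a \<le> u" "u \<le> b"
  have "q u \<noteq> 0"
    using above[OF u] by (auto simp: parabolic_coord_def)
  moreover have "0 \<le> parabolic_flux (q u) (v u)"
    using parabolic_flux_mono[of a u] assms u by force
  ultimately show "\<exists>y. ((\<lambda>t. parabolic_coord (q t)) has_real_derivative y) (at u) \<and> 0 \<le> y"
    using has_real_derivative_parabolic_coord ode by fastforce
qed

lemma parabolic_coord_stays_above:
  assumes "0 \<le> parabolic_flux (q t0) (v t0)" "max 0 (- orbit_energy) < parabolic_coord (q t0)" "t0 \<le> t"
  shows "max 0 (- orbit_energy) < parabolic_coord (q t)"
proof (rule ccontr)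
  define c where "c = max 0 (- orbit_energy)"
  define S where "S = {u. t0 \<le> u \<and> u \<le> t \<and> parabolic_coord (q u) \<le> c}"
  assume "\<not> max 0 (- orbit_energy) < parabolic_coord (q t)"
  then have "t \<in> S"
    using assms(3) by (auto simp: S_def c_def)
  moreover have "closed S"
    unfolding S_def
    by (intro closed_Collect_conj closed_Collect_le continuous_on_id continuous_on_const
        continuous_parabolic_coord)
  moreover have "bdd_below S"
    by (auto simp: S_def)
  ultimately have "Inf S \<in> S"
    using closed_contains_Inf by blast
  txt \<open>Up to the first time \<open>ts\<close> at which \<open>W\<close> drops to \<open>c\<close> it is nondecreasing, so
    by continuity \<open>W ts \<ge> W t0 > c\<close>.\<close>
  define ts where "ts = Inf S"
  have below: "c < parabolic_coord (q u)" if "t0 \<le> u" "u < ts" for u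
    using that cInf_lower[OF _ \<open>bdd_below S\<close>, of u] \<open>Inf S \<in> S\<close> by (force simp: S_def ts_def)
  have "t0 < ts"
    using \<open>Inf S \<in> S\<close> assms(2) by (cases "ts = t0") (auto simp: S_def ts_def c_def)
  have "parabolic_coord (q t0) \<le> parabolic_coord (q ts)"
  proof (rule tendsto_lowerbound)
    show "((\<lambda>u. parabolic_coord (q u)) \<longlongrightarrow> parabolic_coord (q ts)) (at_left ts)"
      using continuous_parabolic_coord
      by (simp add: continuous_on_eq_continuous_at isCont_def filterlim_at_split)
    show "\<forall>\<^sub>F u in at_left ts. parabolic_coord (q t0) \<le> parabolic_coord (q u)"
      using eventually_at_left_real[OF \<open>t0 < ts\<close>]
    proof (rule eventually_mono)
      fix u assume "u \<in> {t0<..<ts}"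
      then show "parabolic_coord (q t0) \<le> parabolic_coord (q u)"
        using parabolic_coord_mono[of t0 u] assms(1) below by (auto simp: c_def)
    qed
  qed simp
  then show False
    using \<open>Inf S \<in> S\<close> assms(2) by (auto simp: S_def ts_def c_def)
qed

lemma parabolic_escape_unbounded:
  assumes "0 \<le> parabolic_flux (q t0) (v t0)" "max 0 (- orbit_energy) < parabolic_coord (q t0)"
  shows "\<not> bounded (range q)"
proof
  assume "bounded (range q)"
  then obtain M where M: "\<And>t. norm (q t) \<le> M"
    unfolding bounded_iff by blast
  have above: "max 0 (- orbit_energy) < parabolic_coord (q t)" if "t0 \<le> t" for t
    using parabolic_coord_stays_above[OF assms that] .
  then have nonzero: "q t \<noteq> 0" if "t0 \<le> t" for t
    using that by (fastforce simp: parabolic_coord_def)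
  define t1 where "t1 = t0 + 1"
  define k where "k = parabolic_flux (q t1) (v t1)"
  have "0 < k"
    using parabolic_flux_increasing[of t0 t1] above assms(1) by (force simp: k_def t1_def)
  have "0 < M"
    using zero_less_norm_iff[of "q t0"] nonzero[of t0] M[of t0] by linarith
  have growth: "parabolic_coord (q t1) + k / M * (t - t1) \<le> parabolic_coord (q t)" if "t1 \<le> t" for t
  proof (rule DERIV_lower_bound_imp_ge[OF that])
    fix u assume u: "t1 \<le> u" "u \<le> t"
    then show "((\<lambda>t. parabolic_coord (q t)) has_real_derivative
                  parabolic_flux (q u) (v u) / norm (q u)) (at u)"
      using has_real_derivative_parabolic_coord ode nonzero[of u] by (simp add: t1_def)
    have "k \<le> parabolic_flux (q u) (v u)"
      using parabolic_flux_mono[of t1 u] above u by (force simp: k_def t1_def)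
    moreover have "0 < norm (q u)" "norm (q u) \<le> M"
      using nonzero[of u] M u by (auto simp: t1_def)
    ultimately show "k / M \<le> parabolic_flux (q u) (v u) / norm (q u)"
      using \<open>0 < k\<close> by (intro frac_le) auto
  qed
  define t where "t = t1 + 2 * M * M / k"
  have "2 * M < parabolic_coord (q t)"
    using growth[of t] \<open>0 < k\<close> \<open>0 < M\<close> above[of t1] by (simp add: t_def t1_def)
  moreover have "parabolic_coord (q t) \<le> 2 * M"
    using parabolic_coord_le[of "q t"] M[of t] by simp
  ultimately show False by simp
qed

lemma bounded_imp_parabolic_coord_le:
  assumes "bounded (range q)"
  shows "parabolic_coord (q t) \<le> max 0 (- orbit_energy)"
proof (rule ccontr)
  assume "\<not> ?thesis"
  then have above: "max 0 (- orbit_energy) < parabolic_coord (q t)"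
    by (simp only: not_le)
  show False
  proof (cases "0 \<le> parabolic_flux (q t) (v t)")
    case True
    then show False
      using parabolic_escape_unbounded above assms by force
  next
    case False
    txt \<open>Reversing time preserves the energy and flips the sign of the flux.\<close>
    interpret reversed: stark_orbit "\<lambda>t. q (- t)" "\<lambda>t. - v (- t)"
      by (rule time_reversal)
    have "q t \<noteq> 0"
      using above by (auto simp: parabolic_coord_def)
    then have "reversed.orbit_energy = orbit_energy"
      using reversed.stark_energy_eq_orbit_energy[of "- t"] stark_energy_eq_orbit_energy
      by (simp add: stark_energy_def)
    moreover have "range (\<lambda>t. q (- t)) = range q"
      by (metis (no_types) surj_def minus_minus image_image range_composition)
    ultimately show False
      using reversed.parabolic_escape_unbounded[of "- t"] above assms False
      by (simp add: parabolic_flux_def)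
  qed
qed

lemma negative_axis_orbit_collides:
  assumes axis: "\<And>t. snd (q t) = 0 \<and> fst (q t) \<le> 0"
  shows "\<exists>t. q t = 0"
proof (rule ccontr)
  assume "\<nexists>t. q t = 0"
  then have nonzero: "q t \<noteq> 0" for t by blast
  then have neg: "fst (q t) < 0" for t
    using axis[of t] by (cases "q t") (auto simp: le_less zero_prod_def)
  have accel: "1 \<le> fst (stark_field (q t))" for t
    using neg[of t] nonzero[of t] unfolding stark_field_eq by (simp add: divide_nonpos_pos less_imp_le)
  define T where "T = \<bar>fst (v 0)\<bar> + 1"
  have speed: "fst (v 0) + 1 * (t - 0) \<le> fst (v t)" if "0 \<le> t" for t
  proof (rule DERIV_lower_bound_imp_ge[OF that])
    fix u
    show "((\<lambda>t. fst (v t)) has_real_derivative fst (stark_field (q u))) (at u)"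
      using has_real_derivative_fst ode nonzero by blast
    show "1 \<le> fst (stark_field (q u))"
      by (rule accel)
  qed
  have moving_right: "1 \<le> fst (v t)" if "T \<le> t" for t
  proof -
    have "0 \<le> t"
      using that abs_ge_zero[of "fst (v 0)"] unfolding T_def by linarith
    then show ?thesis
      using that speed abs_ge_minus_self[of "fst (v 0)"] unfolding T_def by fastforce
  qed
  have "fst (q T) + 1 * (t - T) \<le> fst (q t)" if "T \<le> t" for t
  proof (rule DERIV_lower_bound_imp_ge[OF that])
    fix u assume "T \<le> u"
    show "((\<lambda>t. fst (q t)) has_real_derivative fst (v u)) (at u)"
      using has_real_derivative_fst ode nonzero by blast
    show "1 \<le> fst (v u)"
      using moving_right \<open>T \<le> u\<close> .
  qed
  from this[of "T - fst (q T) + 1"] show False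
    using neg[of T] neg[of "T - fst (q T) + 1"] by simp
qed

lemma bounded_orbit_outside_unit_disc_collision_ejection:
  assumes "bounded (range q)" "1 < norm (q t0)"
  shows "collision_ejection_neg_x q"
proof -
  have "q t0 \<noteq> 0"
    using assms(2) by auto
  then have "- orbit_energy < parabolic_coord (q t0)"
    using neg_stark_energy_less_parabolic_coord[OF assms(2)] stark_energy_eq_orbit_energy by metis
  with bounded_imp_parabolic_coord_le[OF assms(1), of t0] have "max 0 (- orbit_energy) = 0"
    by (auto simp: max_def split: if_splits)
  with bounded_imp_parabolic_coord_le[OF assms(1)] have "parabolic_coord (q t) \<le> 0" for t
    by metis
  then have "parabolic_coord (q t) = 0" for t
    using parabolic_coord_nonneg antisym by blast
  then have "snd (q t) = 0 \<and> fst (q t) \<le> 0" for t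
    using parabolic_coord_eq_0_iff by blast
  then show ?thesis
    unfolding collision_ejection_neg_x_def using negative_axis_orbit_collides by blast
qed

end

theorem corollary1p2:
  fixes q :: "real \<Rightarrow> real \<times> real"
  assumes "stark_solution q"
    and "bounded (range q)"
  shows "collision_ejection_neg_x q \<or> (\<forall>t. norm (q t) \<le> 1)"
proof -
  obtain v where "stark_orbit q v"
    using assms(1) stark_solution_iff_stark_orbit by blast
  then show ?thesis
    using stark_orbit.bounded_orbit_outside_unit_disc_collision_ejection[OF _ assms(2)] not_le by blast
qed

end
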